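(* The Lemke--Howson algorithm solves nondegenerate instances of the tropical Nash equilibrium complementarity problem (TNECP) within at most $2n-1$ iterations, where $n$ is the number of rows of the system.
   Context: Over the max-plus semifield $\mathbb{T}=\mathbb{R}\cup\{-\infty\}$ ($\oplus=\max$, $\odot=+$), TNECP asks, given an $n\times n$ matrix $M^-$ with no all-$(-\infty)$ column and $q^+\in\mathbb{T}^n$ with no $-\infty$ entry, for $(w,z)\in\mathbb{T}^n\times\mathbb{T}^n$ with $w\oplus M^-\odot z=q^+$, $w^\top\odot z=-\infty$, $z\neq-\infty$. The instance is nondegenerate if for each $j\in[n]$ the minimum $\min_k (q^+_k - M^-_{kj})$ is attained exactly once. Write the system as $A\odot x=b$ with $A=(I\ M^-)$ (tropical identity), columns indexed by $[n]\uplus[n]$ (blue copy for $w$, red copy for $z$; two elements are twins if same label, different colors). A tropical basis of $A\odot x=b$ ($A\in\mathbb{T}^{n\times d}$) is $B\subset[d]$ of size $n$ with a bijection $\phi:[n]\to B$ such that for each $i$, $b_i - A_{i\phi(i)}\in\mathbb{T}$ is minimal among $b_k-A_{k\phi(i)}$, $k\in[n]$. In the nondegenerate case, for a basis $B$ and $j\notin B$ there is a unique other basis contained in $B\cup\{j\}$. Fix $j^\star\in[n]$. The Lemke--Howson algorithm starts with $B=[n]\uplus\varnothing$ and entering element $\gamma=(j^\star,\text{red})$, and repeatedly: replaces $B$ by the unique basis $B'\subset B\cup\{\gamma\}$ distinct from $B$, sets $\gamma$ to the twin of the element of $B\setminus B'$, and stops when $B$ is fully labeled (all labels in $[n]$ appear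 in $B$). *)

theory Defs
  imports "HOL-Library.Extended_Real"
begin

text \<open>Tropical numbers T = R with -infinity are modelled by ereal values different from +infinity.  The ground set [n] disjoint-union [n] is modelled
by the sum type nat + nat: Inl i is the blue copy of i (variable w_i), Inr i is the red copy
(variable z_i).\<close>

definition elems :: "nat \<Rightarrow> (nat + nat) set" where
  "elems n = Inl ` {..<n} \<union> Inr ` {..<n}"

definition label :: "nat + nat \<Rightarrow> nat" where
  "label e = (case e of Inl i \<Rightarrow> i | Inr i \<Rightarrow> i)"

definition twin :: "nat + nat \<Rightarrow> nat + nat" where
  "twin e = (case e of Inl i \<Rightarrow> Inr i | Inr i \<Rightarrow> Inl i)"

text \<open>Column e of A = (I  M), I the tropical identity (0 on diagonal, -infinity elsewhere).\<close>
definition colA :: "(nat \<Rightarrow> nat \<Rightarrow> ereal) \<Rightarrow> nat \<Rightarrow> nat + nat \<Rightarrow> ereal" where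
  "colA M k e = (case e of Inl j \<Rightarrow> (if k = j then 0 else -\<infinity>) | Inr j \<Rightarrow> M k j)"

definition trop_basis :: "nat \<Rightarrow> (nat \<Rightarrow> nat \<Rightarrow> ereal) \<Rightarrow> (nat \<Rightarrow> real) \<Rightarrow> (nat + nat) set \<Rightarrow> bool" where
  "trop_basis n M q B \<longleftrightarrow> B \<subseteq> elems n \<and> card B = n \<and>
     (\<exists>\<phi>. bij_betw \<phi> {..<n} B \<and>
        (\<forall>i<n. ereal (q i) - colA M i (\<phi> i) \<noteq> \<infinity> \<and>
               (\<forall>k<n. ereal (q i) - colA M i (\<phi> i) \<le> ereal (q k) - colA M k (\<phi> i))))"

definition nondegenerate :: "nat \<Rightarrow> (nat \<Rightarrow> nat \<Rightarrow> ereal) \<Rightarrow> (nat \<Rightarrow> real) \<Rightarrow> bool" where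
  "nondegenerate n M q \<longleftrightarrow>
     (\<forall>j<n. \<exists>!k. k < n \<and> (\<forall>k'<n. ereal (q k) - M k j \<le> ereal (q k') - M k' j))"

definition fully_labeled :: "nat \<Rightarrow> (nat + nat) set \<Rightarrow> bool" where
  "fully_labeled n B \<longleftrightarrow> (\<forall>i<n. i \<in> label ` B)"

definition LH_step :: "nat \<Rightarrow> (nat \<Rightarrow> nat \<Rightarrow> ereal) \<Rightarrow> (nat \<Rightarrow> real)
    \<Rightarrow> (nat + nat) set \<times> (nat + nat) \<Rightarrow> (nat + nat) set \<times> (nat + nat)" where
  "LH_step n M q S =
     (let B = fst S; \<gamma> = snd S;
          B' = (THE B'. trop_basis n M q B' \<and> B' \<subseteq> insert \<gamma> B \<and> B' \<noteq> B)
      in (B', twin (THE e. e \<in> B - B')))"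

definition LH_state :: "nat \<Rightarrow> (nat \<Rightarrow> nat \<Rightarrow> ereal) \<Rightarrow> (nat \<Rightarrow> real) \<Rightarrow> nat \<Rightarrow> nat
    \<Rightarrow> (nat + nat) set \<times> (nat + nat)" where
  "LH_state n M q jstar k = (LH_step n M q ^^ k) (Inl ` {..<n}, Inr jstar)"

definition basic_point :: "nat \<Rightarrow> (nat \<Rightarrow> nat \<Rightarrow> ereal) \<Rightarrow> (nat \<Rightarrow> real) \<Rightarrow> (nat + nat) set
    \<Rightarrow> nat + nat \<Rightarrow> ereal" where
  "basic_point n M q B e =
     (if e \<in> B then Min {ereal (q k) - colA M k e | k. k < n} else -\<infinity>)"

definition TNECP_sol :: "nat \<Rightarrow> (nat \<Rightarrow> nat \<Rightarrow> ereal) \<Rightarrow> (nat \<Rightarrow> real)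
    \<Rightarrow> (nat \<Rightarrow> ereal) \<Rightarrow> (nat \<Rightarrow> ereal) \<Rightarrow> bool" where
  "TNECP_sol n M q w z \<longleftrightarrow>
     (\<forall>i<n. w i \<noteq> \<infinity> \<and> z i \<noteq> \<infinity>) \<and>
     (\<forall>i<n. max (w i) (Max {M i j + z j | j. j < n}) = ereal (q i)) \<and>
     Max {w i + z i | i. i < n} = -\<infinity> \<and>
     (\<exists>j<n. z j \<noteq> -\<infinity>)"

end

theory Submission
  imports Defs
begin

text \<open>By nondegeneracy every column j has a unique row min_row j attaining min_k (q_k - M_kj),
  and an n-element set B is a tropical basis iff the map tight_row (blue i to i, red j to
  min_row j) is injective on B; a pivot therefore removes the unique element of B sharing the
  tight row of the entering element.  Every basis met by Lemke--Howson consists of a set R of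
  red elements together with the blue copies of the rows outside min_row ` R.  Along the orbit
  jstar, min_row jstar, ... the algorithm first adds red copies of orbit points until the orbit
  closes up, orbit (m + 1) = orbit t with m < n; it then removes the red copies of the tail
  orbit 0, ..., orbit (t - 1) in reverse order.  It stops with R the cycle orbit t, ..., orbit m,
  which is closed under min_row, so the basis is fully labeled and its basic point solves the
  TNECP.  The two phases take m + 1 and t - 1 steps, at most 2n - 1 in total.\<close>

lemma ex_bij_betw_right_inverse_iff:
  "(\<exists>\<phi>. bij_betw \<phi> A B \<and> (\<forall>a\<in>A. f (\<phi> a) = a)) \<longleftrightarrow> bij_betw f B A"
proof
  assume "\<exists>\<phi>. bij_betw \<phi> A B \<and> (\<forall>a\<in>A. f (\<phi> a) = a)"
  then obtain \<phi> where \<phi>: "bij_betw \<phi> A B" "\<forall>a\<in>A. f (\<phi> a) = a" by blast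
  then have "\<forall>b\<in>B. \<phi> (f b) = b" by (metis bij_betw_iff_bijections)
  with \<phi> show "bij_betw f B A" by (intro bij_betw_byWitness[where f' = \<phi>]) (auto simp: bij_betw_def)
next
  assume "bij_betw f B A"
  then show "\<exists>\<phi>. bij_betw \<phi> A B \<and> (\<forall>a\<in>A. f (\<phi> a) = a)"
    by (metis bij_betw_the_inv_into f_the_inv_into_f_bij_betw)
qed

lemma ereal_sub_le_iff_add_le:
  "x \<noteq> \<infinity> \<Longrightarrow> ereal c \<le> ereal a - x \<longleftrightarrow> x + ereal c \<le> ereal a"
  by (cases x) auto

lemma twin_twin [simp]: "twin (twin e) = e"
  by (cases e) (simp_all add: twin_def)

lemma label_twin [simp]: "label (twin e) = label e"
  by (cases e) (simp_all add: twin_def label_def)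

lemma finite_elems: "finite (elems n)"
  by (simp add: elems_def)

lemma label_eq_iff: "label x = label e \<longleftrightarrow> x = e \<or> x = twin e"
  by (cases x; cases e) (simp_all add: label_def twin_def)

lemma not_fully_labeled_if_twins_missing:
  assumes "e \<notin> B" "twin e \<notin> B" "label e < n"
  shows "\<not> fully_labeled n B"
proof -
  have "label e \<notin> label ` B" using assms(1,2) by (auto simp: label_eq_iff)
  then show ?thesis using assms(3) unfolding fully_labeled_def by blast
qed

locale nondeg_tnecp =
  fixes n :: nat and M :: "nat \<Rightarrow> nat \<Rightarrow> ereal" and q :: "nat \<Rightarrow> real"
  assumes M_trop: "\<forall>i<n. \<forall>j<n. M i j \<noteq> \<infinity>"
    and M_col: "\<forall>j<n. \<exists>k<n. M k j \<noteq> -\<infinity>"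
    and nondeg: "nondegenerate n M q"
begin

definition min_row :: "nat \<Rightarrow> nat" where
  "min_row j = (THE k. k < n \<and> (\<forall>k'<n. ereal (q k) - M k j \<le> ereal (q k') - M k' j))"

lemma min_row_unique:
  assumes "j < n" "k < n" "\<forall>k'<n. ereal (q k) - M k j \<le> ereal (q k') - M k' j"
  shows "k = min_row j"
proof -
  have "\<exists>!k. k < n \<and> (\<forall>k'<n. ereal (q k) - M k j \<le> ereal (q k') - M k' j)"
    using nondeg assms(1) unfolding nondegenerate_def by blast
  then show ?thesis unfolding min_row_def using assms(2,3) by (simp add: the1_equality)
qed

lemma min_row_minimal:
  assumes "j < n"
  shows "min_row j < n \<and> (\<forall>k<n. ereal (q (min_row j)) - M (min_row j) j \<le> ereal (q k) - M k j)"
proof -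
  have "\<exists>!k. k < n \<and> (\<forall>k'<n. ereal (q k) - M k j \<le> ereal (q k') - M k' j)"
    using nondeg assms unfolding nondegenerate_def by blast
  then show ?thesis unfolding min_row_def by (rule theI')
qed

lemma min_row_lt: "j < n \<Longrightarrow> min_row j < n"
  and min_row_le: "j < n \<Longrightarrow> k < n \<Longrightarrow> ereal (q (min_row j)) - M (min_row j) j \<le> ereal (q k) - M k j"
  using min_row_minimal by blast+

lemma M_min_row_real:
  assumes "j < n" shows "\<bar>M (min_row j) j\<bar> \<noteq> \<infinity>"
proof -
  obtain k where k: "k < n" "M k j \<noteq> -\<infinity>" using M_col assms by blast
  then have "ereal (q k) - M k j \<noteq> \<infinity>" using M_trop assms by (cases "M k j") auto
  then have "M (min_row j) j \<noteq> -\<infinity>" using min_row_le[OF assms k(1)] by auto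
  then show ?thesis using M_trop assms min_row_lt by auto
qed

text \<open>The entry min_k (q_k - M_kj) of z in a basic point; it is finite, hence taken as a real.\<close>
definition col_min :: "nat \<Rightarrow> real" where
  "col_min j = q (min_row j) - real_of_ereal (M (min_row j) j)"

lemma ereal_col_min: "j < n \<Longrightarrow> ereal (col_min j) = ereal (q (min_row j)) - M (min_row j) j"
  using M_min_row_real[of j] by (cases "M (min_row j) j") (auto simp: col_min_def)

lemma M_plus_col_min_le:
  assumes "j < n" "i < n" shows "M i j + ereal (col_min j) \<le> ereal (q i)"
proof -
  have "ereal (col_min j) \<le> ereal (q i) - M i j"
    using min_row_le[OF assms] ereal_col_min[OF assms(1)] by simp
  then show ?thesis using ereal_sub_le_iff_add_le M_trop assms by blast
qed

lemma M_plus_col_min_eq: "j < n \<Longrightarrow> M (min_row j) j + ereal (col_min j) = ereal (q (min_row j))"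
  using M_min_row_real[of j] by (cases "M (min_row j) j") (auto simp: col_min_def)

definition tight_row :: "nat + nat \<Rightarrow> nat" where
  "tight_row e = (case e of Inl i \<Rightarrow> i | Inr j \<Rightarrow> min_row j)"

lemma tight_row_lt: "e \<in> elems n \<Longrightarrow> tight_row e < n"
  by (auto simp: elems_def tight_row_def min_row_lt)

lemma tight_at_row_iff:
  assumes "e \<in> elems n" "i < n"
  shows "(ereal (q i) - colA M i e \<noteq> \<infinity> \<and> (\<forall>k<n. ereal (q i) - colA M i e \<le> ereal (q k) - colA M k e))
    \<longleftrightarrow> tight_row e = i"
proof (cases e)
  case (Inl j)
  then show ?thesis by (auto simp: colA_def tight_row_def)
next
  case (Inr j)
  with assms have j: "j < n" by (auto simp: elems_def)
  have "ereal (q (min_row j)) - M (min_row j) j \<noteq> \<infinity>"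
    using M_min_row_real[OF j] by (cases "M (min_row j) j") auto
  then show ?thesis using Inr min_row_le[OF j] min_row_unique[OF j assms(2)]
    by (auto simp: colA_def tight_row_def)
qed

lemma trop_basis_iff: "trop_basis n M q B \<longleftrightarrow> B \<subseteq> elems n \<and> bij_betw tight_row B {..<n}"
proof -
  have "trop_basis n M q B \<longleftrightarrow>
      B \<subseteq> elems n \<and> (\<exists>\<phi>. bij_betw \<phi> {..<n} B \<and> (\<forall>i\<in>{..<n}. tight_row (\<phi> i) = i))"
  proof -
    have "(\<forall>i<n. ereal (q i) - colA M i (\<phi> i) \<noteq> \<infinity> \<and>
        (\<forall>k<n. ereal (q i) - colA M i (\<phi> i) \<le> ereal (q k) - colA M k (\<phi> i)))
      \<longleftrightarrow> (\<forall>i\<in>{..<n}. tight_row (\<phi> i) = i)" if "bij_betw \<phi> {..<n} B" "B \<subseteq> elems n" for \<phi>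
      using tight_at_row_iff bij_betwE[OF that(1)] that(2) by blast
    moreover have "card B = n" if "bij_betw \<phi> {..<n} B" for \<phi>
      using bij_betw_same_card[OF that] by simp
    ultimately show ?thesis unfolding trop_basis_def by metis
  qed
  then show ?thesis using ex_bij_betw_right_inverse_iff by blast
qed

lemma trop_basis_iff_card_inj:
  assumes "B \<subseteq> elems n"
  shows "trop_basis n M q B \<longleftrightarrow> card B = n \<and> inj_on tight_row B"
proof -
  have sub: "tight_row ` B \<subseteq> {..<n}" using assms tight_row_lt by blast
  have "finite B" using assms finite_elems finite_subset by blast
  then have "tight_row ` B = {..<n} \<longleftrightarrow> card B = n" if "inj_on tight_row B"
    using sub card_image[OF that] card_subset_eq[of "{..<n}" "tight_row ` B"] by auto
  then show ?thesis using assms unfolding trop_basis_iff bij_betw_def by blast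
qed

lemma trop_basis_card: "trop_basis n M q B \<Longrightarrow> card B = n"
  by (simp add: trop_basis_def)

lemma trop_basis_inj: "trop_basis n M q B \<Longrightarrow> inj_on tight_row B"
  by (simp add: trop_basis_iff bij_betw_def)

lemma trop_basis_finite: "trop_basis n M q B \<Longrightarrow> finite B"
  using finite_elems finite_subset by (auto simp: trop_basis_def)

lemma exists_same_tight_row:
  assumes "trop_basis n M q B" "\<gamma> \<in> elems n"
  obtains e where "e \<in> B" "tight_row e = tight_row \<gamma>"
proof -
  have "tight_row \<gamma> \<in> tight_row ` B"
    using assms tight_row_lt unfolding trop_basis_iff bij_betw_def by simp
  then show ?thesis using that by (metis imageE)
qed

lemma trop_basis_exchange:
  assumes B: "trop_basis n M q B" and \<gamma>: "\<gamma> \<in> elems n" "\<gamma> \<notin> B"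
    and e: "e \<in> B" "tight_row e = tight_row \<gamma>"
  shows "trop_basis n M q (insert \<gamma> (B - {e}))"
proof -
  have "0 < n" using e(1) trop_basis_finite[OF B] trop_basis_card[OF B] card_gt_0_iff by blast
  then have "card (insert \<gamma> (B - {e})) = n"
    using trop_basis_card[OF B] trop_basis_finite[OF B] e \<gamma>(2) by (simp add: card_Suc_Diff1)
  moreover have "tight_row \<gamma> \<notin> tight_row ` (B - {e})"
    using inj_onD[OF trop_basis_inj[OF B]] e by force
  then have "inj_on tight_row (insert \<gamma> (B - {e}))"
    using inj_on_diff[OF trop_basis_inj[OF B]] \<gamma>(2) by auto
  moreover have "insert \<gamma> (B - {e}) \<subseteq> elems n" using B \<gamma> by (auto simp: trop_basis_def)
  ultimately show ?thesis using trop_basis_iff_card_inj by blast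
qed

lemma other_basis_iff:
  assumes B: "trop_basis n M q B" and \<gamma>: "\<gamma> \<in> elems n" "\<gamma> \<notin> B"
    and e: "e \<in> B" "tight_row e = tight_row \<gamma>"
  shows "trop_basis n M q B' \<and> B' \<subseteq> insert \<gamma> B \<and> B' \<noteq> B \<longleftrightarrow> B' = insert \<gamma> (B - {e})"
proof
  assume B': "trop_basis n M q B' \<and> B' \<subseteq> insert \<gamma> B \<and> B' \<noteq> B"
  have card_B': "card B' = n" using B' trop_basis_card by blast
  have "\<gamma> \<in> B'"
  proof (rule ccontr)
    assume "\<gamma> \<notin> B'"
    then have "B' \<subseteq> B" using B' by blast
    then show False using B' card_B' trop_basis_card[OF B] card_subset_eq[OF trop_basis_finite[OF B]] by metis
  qed
  moreover have "e \<notin> B'"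
  proof
    assume "e \<in> B'"
    then have "e = \<gamma>" using inj_onD[OF trop_basis_inj e(2)] B' \<open>\<gamma> \<in> B'\<close> by blast
    then show False using e(1) \<gamma>(2) by blast
  qed
  ultimately have "B' \<subseteq> insert \<gamma> (B - {e})" using B' by blast
  moreover have "card B' = card (insert \<gamma> (B - {e}))"
    using card_B' trop_basis_card[OF trop_basis_exchange[OF assms]] by simp
  ultimately show "B' = insert \<gamma> (B - {e})"
    using card_subset_eq trop_basis_finite[OF trop_basis_exchange[OF assms]] by blast
next
  assume "B' = insert \<gamma> (B - {e})"
  moreover have "insert \<gamma> (B - {e}) \<noteq> B" using \<gamma>(2) by blast
  ultimately show "trop_basis n M q B' \<and> B' \<subseteq> insert \<gamma> B \<and> B' \<noteq> B"
    using trop_basis_exchange[OF assms] by blast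
qed

lemma unique_other_basis:
  assumes "trop_basis n M q B" "\<gamma> \<in> elems n" "\<gamma> \<notin> B"
  shows "\<exists>!B'. trop_basis n M q B' \<and> B' \<subseteq> insert \<gamma> B \<and> B' \<noteq> B"
proof -
  obtain e where "e \<in> B" "tight_row e = tight_row \<gamma>" using exists_same_tight_row assms by blast
  then have "trop_basis n M q B' \<and> B' \<subseteq> insert \<gamma> B \<and> B' \<noteq> B \<longleftrightarrow> B' = insert \<gamma> (B - {e})" for B'
    using other_basis_iff[OF assms] by blast
  then show ?thesis by simp
qed

lemma LH_step_pivot:
  assumes "trop_basis n M q B" "\<gamma> \<in> elems n" "\<gamma> \<notin> B" "e \<in> B" "tight_row e = tight_row \<gamma>"
  shows "LH_step n M q (B, \<gamma>) = (insert \<gamma> (B - {e}), twin e)"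
proof -
  have "(THE B'. trop_basis n M q B' \<and> B' \<subseteq> insert \<gamma> B \<and> B' \<noteq> B) = insert \<gamma> (B - {e})"
    using other_basis_iff[OF assms] by simp
  moreover have "B - insert \<gamma> (B - {e}) = {e}" using assms(3,4) by blast
  ultimately show ?thesis unfolding LH_step_def Let_def fst_conv snd_conv by simp
qed

text \<open>After a pivot the twin of the entering element has just left, so if the new entering
  element is not in the basis either, its label is missing.\<close>
lemma LH_step_not_fully_labeled:
  assumes "trop_basis n M q B" "\<gamma> \<in> elems n" "\<gamma> \<notin> B"
    and "snd (LH_step n M q (B, \<gamma>)) \<notin> fst (LH_step n M q (B, \<gamma>))"
  shows "\<not> fully_labeled n (fst (LH_step n M q (B, \<gamma>)))"
proof -
  obtain e where e: "e \<in> B" "tight_row e = tight_row \<gamma>"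
    using exists_same_tight_row assms(1,2) by blast
  have "e \<in> elems n" using assms(1) e(1) by (auto simp: trop_basis_def)
  then have "label e < n" by (auto simp: elems_def label_def)
  moreover have "e \<notin> insert \<gamma> (B - {e})" using assms(3) e(1) by blast
  ultimately show ?thesis
    using assms(4) not_fully_labeled_if_twins_missing[of "twin e"] by (simp add: LH_step_pivot[OF assms(1-3) e])
qed

definition red_basis :: "nat set \<Rightarrow> (nat + nat) set" where
  "red_basis R = Inl ` ({..<n} - min_row ` R) \<union> Inr ` R"

lemma Inl_mem_red_basis [simp]: "Inl i \<in> red_basis R \<longleftrightarrow> i < n \<and> i \<notin> min_row ` R"
  by (auto simp: red_basis_def)

lemma Inr_mem_red_basis [simp]: "Inr j \<in> red_basis R \<longleftrightarrow> j \<in> R"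
  by (auto simp: red_basis_def)

lemma trop_basis_red_basis:
  assumes R: "R \<subseteq> {..<n}" "inj_on min_row R"
  shows "trop_basis n M q (red_basis R)"
proof -
  have "finite R" using R(1) finite_subset by blast
  have "min_row ` R \<subseteq> {..<n}" using R(1) min_row_lt by auto
  then have "card ({..<n} - min_row ` R) = n - card R"
    using card_Diff_subset[of "min_row ` R"] card_image[OF R(2)] \<open>finite R\<close> by (simp add: finite_subset)
  moreover have "card R \<le> n" using card_mono[OF _ R(1)] by simp
  moreover have "card (red_basis R) = card ({..<n} - min_row ` R) + card R"
    unfolding red_basis_def using \<open>finite R\<close>
    by (subst card_Un_disjoint) (auto simp: card_image)
  moreover have "inj_on tight_row (red_basis R)"
    using inj_onD[OF R(2)] by (auto simp: inj_on_def red_basis_def tight_row_def)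
  moreover have "red_basis R \<subseteq> elems n" using R(1) by (auto simp: red_basis_def elems_def)
  ultimately show ?thesis using trop_basis_iff_card_inj by simp
qed

lemma LH_step_red_basis_insert:
  assumes R: "R \<subseteq> {..<n}" "inj_on min_row R"
    and j: "j < n" "j \<notin> R" "min_row j \<notin> min_row ` R"
  shows "LH_step n M q (red_basis R, Inr j) = (red_basis (insert j R), Inr (min_row j))"
proof -
  have "LH_step n M q (red_basis R, Inr j)
      = (insert (Inr j) (red_basis R - {Inl (min_row j)}), twin (Inl (min_row j)))"
    using j min_row_lt[OF j(1)]
    by (intro LH_step_pivot trop_basis_red_basis R) (auto simp: elems_def tight_row_def)
  moreover have "insert (Inr j) (red_basis R - {Inl (min_row j)}) = red_basis (insert j R)"
    by (auto simp: red_basis_def)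
  ultimately show ?thesis by (simp add: twin_def)
qed

lemma LH_step_red_basis_swap:
  assumes R: "R \<subseteq> {..<n}" "inj_on min_row R"
    and j: "j < n" "j \<notin> R" "j' \<in> R" "min_row j = min_row j'"
  shows "LH_step n M q (red_basis R, Inr j) = (red_basis (insert j (R - {j'})), Inl j')"
proof -
  have "LH_step n M q (red_basis R, Inr j) = (insert (Inr j) (red_basis R - {Inr j'}), twin (Inr j'))"
    using R j by (intro LH_step_pivot trop_basis_red_basis R) (auto simp: elems_def tight_row_def)
  moreover have "min_row ` insert j (R - {j'}) = min_row ` R"
    using j(3,4) by (auto simp: image_iff)
  then have "insert (Inr j) (red_basis R - {Inr j'}) = red_basis (insert j (R - {j'}))"
    using j(2,3) unfolding red_basis_def by auto
  ultimately show ?thesis by (simp add: twin_def)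
qed

lemma LH_step_red_basis_remove:
  assumes R: "R \<subseteq> {..<n}" "inj_on min_row R" and j: "j \<in> R"
  shows "LH_step n M q (red_basis R, Inl (min_row j)) = (red_basis (R - {j}), Inl j)"
proof -
  have "j < n" using R(1) j by blast
  then have "LH_step n M q (red_basis R, Inl (min_row j))
      = (insert (Inl (min_row j)) (red_basis R - {Inr j}), twin (Inr j))"
    using j min_row_lt by (intro LH_step_pivot trop_basis_red_basis R) (auto simp: elems_def tight_row_def)
  moreover have "min_row ` (R - {j}) = min_row ` R - {min_row j}"
    using inj_on_image_set_diff[OF R(2), of "{j}"] j by auto
  then have "insert (Inl (min_row j)) (red_basis R - {Inr j}) = red_basis (R - {j})"
    using j min_row_lt[OF \<open>j < n\<close>] unfolding red_basis_def by auto
  ultimately show ?thesis by (simp add: twin_def)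
qed

lemma fully_labeled_red_basis_iff:
  assumes "R \<subseteq> {..<n}"
  shows "fully_labeled n (red_basis R) \<longleftrightarrow> min_row ` R \<subseteq> R"
proof -
  have "label ` red_basis R = ({..<n} - min_row ` R) \<union> R" by (force simp: red_basis_def label_def)
  moreover have "min_row ` R \<subseteq> {..<n}" using assms min_row_lt by auto
  ultimately show ?thesis unfolding fully_labeled_def by auto
qed

lemma basic_point_red_basis_Inl:
  assumes "i < n"
  shows "basic_point n M q (red_basis R) (Inl i) = (if i \<in> min_row ` R then -\<infinity> else ereal (q i))"
proof -
  have "Min {ereal (q k) - colA M k (Inl i) | k. k < n} = ereal (q i)"
    using assms by (intro Min_eqI) (auto simp: colA_def)
  then show ?thesis using assms by (simp add: basic_point_def)
qed

lemma basic_point_red_basis_Inr: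
  assumes "j < n"
  shows "basic_point n M q (red_basis R) (Inr j) = (if j \<in> R then ereal (col_min j) else -\<infinity>)"
proof -
  have "Min {ereal (q k) - colA M k (Inr j) | k. k < n} = ereal (col_min j)"
    using assms min_row_lt min_row_le ereal_col_min
    by (intro Min_eqI) (auto simp: colA_def intro!: exI[of _ "min_row j"])
  then show ?thesis by (simp add: basic_point_def)
qed

lemma TNECP_sol_red_basis:
  assumes R: "R \<subseteq> {..<n}" and closed: "min_row ` R = R" and "R \<noteq> {}"
  shows "TNECP_sol n M q (\<lambda>i. basic_point n M q (red_basis R) (Inl i))
                         (\<lambda>j. basic_point n M q (red_basis R) (Inr j))"
    (is "TNECP_sol n M q ?w ?z")
proof -
  have w: "?w i = (if i \<in> R then -\<infinity> else ereal (q i))" if "i < n" for i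
    using basic_point_red_basis_Inl[OF that] closed by simp
  have z: "?z j = (if j \<in> R then ereal (col_min j) else -\<infinity>)" if "j < n" for j
    using basic_point_red_basis_Inr[OF that] by simp
  obtain j0 where "j0 \<in> R" using \<open>R \<noteq> {}\<close> by blast
  then have "j0 < n" using R by blast
  have row_balance: "max (?w i) (Max {M i j + ?z j | j. j < n}) = ereal (q i)" if i: "i < n" for i
  proof -
    have "M i j + ?z j \<le> ereal (q i)" if "j < n" for j
      using z[OF that] M_plus_col_min_le[OF that i] M_trop i that by (cases "M i j") auto
    then have Max_le: "Max {M i j + ?z j | j. j < n} \<le> ereal (q i)"
      using \<open>j0 < n\<close> by (subst Max_le_iff) auto
    show ?thesis
    proof (cases "i \<in> R")
      case True
      then obtain j where j: "j \<in> R" "min_row j = i" using closed by (metis imageE)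
      then have "j < n" using R by blast
      then have "M i j + ?z j = ereal (q i)" using z j M_plus_col_min_eq by auto
      then have "ereal (q i) \<le> Max {M i j + ?z j | j. j < n}"
        using \<open>j < n\<close> by (intro Max_ge) (auto intro!: exI[of _ j])
      then show ?thesis using Max_le w[OF i] True by simp
    qed (use Max_le w[OF i] in simp)
  qed
  have "?w i + ?z i = -\<infinity>" if "i < n" for i
    using w[OF that] z[OF that] by simp
  then have complementary: "Max {?w i + ?z i | i. i < n} = -\<infinity>"
    using \<open>j0 < n\<close> by (intro Max_eqI) auto
  have "?z j0 \<noteq> -\<infinity>" using z[OF \<open>j0 < n\<close>] \<open>j0 \<in> R\<close> by simp
  then show ?thesis
    unfolding TNECP_sol_def using w z row_balance complementary \<open>j0 < n\<close> by auto
qed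

end

lemma LH_state_Suc: "LH_state n M q jstar (Suc s) = LH_step n M q (LH_state n M q jstar s)"
  by (simp add: LH_state_def)

locale LH_run = nondeg_tnecp +
  fixes jstar :: nat
  assumes jstar_lt: "jstar < n"
begin

definition orbit :: "nat \<Rightarrow> nat" where
  "orbit s = (min_row ^^ s) jstar"

lemma orbit_0: "orbit 0 = jstar"
  by (simp add: orbit_def)

lemma orbit_Suc: "orbit (Suc s) = min_row (orbit s)"
  by (simp add: orbit_def)

lemma orbit_lt: "orbit s < n"
  by (induction s) (simp_all add: orbit_0 orbit_Suc jstar_lt min_row_lt)

lemma orbit_image_subset: "orbit ` A \<subseteq> {..<n}"
  using orbit_lt by blast

lemma LH_state_0: "LH_state n M q jstar 0 = (red_basis (orbit ` {..<0}), Inr (orbit 0))"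
  by (simp add: LH_state_def red_basis_def orbit_0)

lemma orbit_first_repetition:
  obtains m t where "t \<le> m" "inj_on orbit {..m}" "orbit (Suc m) = orbit t"
proof -
  have "card (orbit ` {..n}) \<le> n" using card_mono[OF _ orbit_image_subset] by fastforce
  then have "\<not> inj_on orbit {..n}" using card_image by fastforce
  then obtain a b where "a < b" "orbit b = orbit a"
    unfolding inj_on_def by (metis linorder_neqE_nat)
  then have repeats: "orbit b \<in> orbit ` {..<b}" by (metis imageI lessThan_iff)
  define s where "s = (LEAST s. orbit s \<in> orbit ` {..<s})"
  have s: "orbit s \<in> orbit ` {..<s}" unfolding s_def using repeats by (rule LeastI)
  then obtain m where m: "s = Suc m" using not0_implies_Suc by fastforce
  obtain t where "t \<le> m" "orbit (Suc m) = orbit t" using s m by (auto simp: less_Suc_eq_le)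
  moreover have "inj_on orbit {..m}"
  proof (rule inj_onI, rule ccontr)
    fix a b assume ab: "a \<in> {..m}" "b \<in> {..m}" "orbit a = orbit b" "a \<noteq> b"
    then obtain lo hi where "lo < hi" "hi \<le> m" "orbit lo = orbit hi"
      by (metis atMost_iff linorder_neqE_nat)
    then have "orbit hi \<in> orbit ` {..<hi}" by (metis imageI lessThan_iff)
    then have "s \<le> hi" unfolding s_def by (rule Least_le)
    then show False using \<open>hi \<le> m\<close> m by simp
  qed
  ultimately show ?thesis using that by blast
qed

end

locale LH_cycle = LH_run +
  fixes m t :: nat
  assumes t_le_m: "t \<le> m"
    and orbit_inj: "inj_on orbit {..m}"
    and orbit_Suc_m: "orbit (Suc m) = orbit t"
begin

lemma m_lt_n: "m < n"
proof -
  have "Suc m = card (orbit ` {..m})" using card_image[OF orbit_inj] by simp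
  also have "\<dots> \<le> n" using card_mono[OF _ orbit_image_subset] by fastforce
  finally show ?thesis by simp
qed

text \<open>On the indices 0, ..., m the orbit is injective and ends up in the cycle orbit t, ..., orbit m
  (a rho shape); rho_succ is min_row transported to these indices.\<close>
definition rho_succ :: "nat \<Rightarrow> nat" where
  "rho_succ a = (if a = m then t else Suc a)"

lemma min_row_orbit: "a \<le> m \<Longrightarrow> min_row (orbit a) = orbit (rho_succ a)"
  using orbit_Suc_m by (auto simp: rho_succ_def orbit_Suc[symmetric])

lemma rho_succ_le: "a \<le> m \<Longrightarrow> rho_succ a \<le> m"
  using t_le_m by (auto simp: rho_succ_def)

lemma min_row_image_orbit: "A \<subseteq> {..m} \<Longrightarrow> min_row ` orbit ` A = orbit ` rho_succ ` A"
  using min_row_orbit by (force simp: image_image)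

lemma orbit_mem_image_iff: "a \<le> m \<Longrightarrow> A \<subseteq> {..m} \<Longrightarrow> orbit a \<in> orbit ` A \<longleftrightarrow> a \<in> A"
  using inj_onD[OF orbit_inj] by blast

lemma inj_on_min_row_orbit:
  assumes A: "A \<subseteq> {..m}" and inj: "inj_on rho_succ A"
  shows "inj_on min_row (orbit ` A)"
proof (rule inj_onI)
  fix x y assume "x \<in> orbit ` A" "y \<in> orbit ` A" "min_row x = min_row y"
  then obtain a b where ab: "a \<in> A" "b \<in> A" "x = orbit a" "y = orbit b" "min_row x = min_row y"
    by blast
  moreover have "a \<le> m" "b \<le> m" using A ab by auto
  ultimately have "orbit (rho_succ a) = orbit (rho_succ b)" using min_row_orbit by metis
  then have "rho_succ a = rho_succ b" using inj_onD[OF orbit_inj] rho_succ_le ab(1,2) A by auto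
  then show "x = y" using inj_onD[OF inj] ab by auto
qed

text \<open>For t = 0 the closing step is still an insertion: the blue copy of jstar is the one that leaves.\<close>
lemma forward_phase:
  assumes "s \<le> m \<or> (s = Suc m \<and> t = 0)"
  shows "LH_state n M q jstar s = (red_basis (orbit ` {..<s}), Inr (orbit s))"
  using assms
proof (induction s)
  case 0
  show ?case by (rule LH_state_0)
next
  case (Suc s)
  then have s: "s \<le> m" "s = m \<Longrightarrow> t = 0" by auto
  have inj: "inj_on rho_succ {..<s}" using s(1) by (auto simp: inj_on_def rho_succ_def)
  have "min_row ` orbit ` {..<s} = orbit ` rho_succ ` {..<s}"
    using s(1) by (intro min_row_image_orbit) auto
  also have "rho_succ ` {..<s} = Suc ` {..<s}" using s(1) by (auto simp: rho_succ_def)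
  finally have "min_row ` orbit ` {..<s} = orbit ` Suc ` {..<s}" .
  moreover have "rho_succ s \<notin> Suc ` {..<s}" "Suc ` {..<s} \<subseteq> {..m}" using s by (auto simp: rho_succ_def)
  then have "orbit (rho_succ s) \<notin> orbit ` Suc ` {..<s}"
    using orbit_mem_image_iff[OF rho_succ_le[OF s(1)]] by blast
  ultimately have "min_row (orbit s) \<notin> min_row ` orbit ` {..<s}"
    using min_row_orbit[OF s(1)] by simp
  moreover have "{..<s} \<subseteq> {..m}" using s(1) by auto
  then have "orbit s \<notin> orbit ` {..<s}" using orbit_mem_image_iff[OF s(1)] by simp
  ultimately have "LH_step n M q (red_basis (orbit ` {..<s}), Inr (orbit s))
      = (red_basis (insert (orbit s) (orbit ` {..<s})), Inr (min_row (orbit s)))"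
    using s(1) inj by (intro LH_step_red_basis_insert orbit_image_subset orbit_lt inj_on_min_row_orbit) auto
  then show ?case using Suc s(1) by (simp add: LH_state_Suc lessThan_Suc orbit_Suc)
qed

lemma inj_on_rho_succ_backward: "a < t \<Longrightarrow> inj_on rho_succ ({..<a} \<union> {t..m})"
  by (auto simp: inj_on_def rho_succ_def)

lemma orbit_image_diff: "A \<subseteq> {..m} \<Longrightarrow> a \<le> m \<Longrightarrow> orbit ` A - {orbit a} = orbit ` (A - {a})"
  using inj_on_image_set_diff[OF orbit_inj, of A "{a}"] by auto

lemma backward_phase:
  assumes "0 < t" "d < t"
  shows "LH_state n M q jstar (Suc m + d)
    = (red_basis (orbit ` ({..<t - Suc d} \<union> {t..m})), Inl (orbit (t - Suc d)))"
  using assms(2)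
proof (induction d)
  case 0
  have "t - 1 < m" using assms(1) t_le_m by simp
  have "min_row (orbit m) = min_row (orbit (t - 1))"
    using orbit_Suc_m assms(1) by (simp add: orbit_Suc[symmetric])
  moreover have "{..<m} \<subseteq> {..m}" by auto
  then have "orbit m \<notin> orbit ` {..<m}" "orbit (t - 1) \<in> orbit ` {..<m}"
    using orbit_mem_image_iff \<open>t - 1 < m\<close> by simp_all
  moreover have "inj_on rho_succ {..<m}" by (auto simp: inj_on_def rho_succ_def)
  ultimately have "LH_step n M q (red_basis (orbit ` {..<m}), Inr (orbit m))
      = (red_basis (insert (orbit m) (orbit ` {..<m} - {orbit (t - 1)})), Inl (orbit (t - 1)))"
    by (intro LH_step_red_basis_swap orbit_image_subset orbit_lt inj_on_min_row_orbit) auto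
  moreover have "insert (orbit m) (orbit ` {..<m} - {orbit (t - 1)}) = orbit ` ({..<t - 1} \<union> {t..m})"
  proof -
    have "orbit ` {..<m} - {orbit (t - 1)} = orbit ` ({..<m} - {t - 1})"
      using \<open>t - 1 < m\<close> by (intro orbit_image_diff) auto
    moreover have "insert m ({..<m} - {t - 1}) = {..<t - 1} \<union> {t..m}" using assms(1) t_le_m by auto
    ultimately show ?thesis by (metis image_insert)
  qed
  ultimately show ?case using forward_phase[of m] by (simp add: LH_state_Suc)
next
  case (Suc d)
  define a where "a = t - Suc (Suc d)"
  define A where "A = {..<Suc a} \<union> {t..m}"
  have a: "t - Suc d = Suc a" "a \<in> A" "Suc a < t" using Suc.prems by (auto simp: a_def A_def)
  have A: "A \<subseteq> {..m}" "inj_on rho_succ A"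
    using inj_on_rho_succ_backward a(3) t_le_m by (auto simp: A_def)
  have "LH_step n M q (red_basis (orbit ` A), Inl (min_row (orbit a)))
      = (red_basis (orbit ` A - {orbit a}), Inl (orbit a))"
    using a(2) by (intro LH_step_red_basis_remove orbit_image_subset inj_on_min_row_orbit A) auto
  moreover have "orbit ` A - {orbit a} = orbit ` (A - {a})"
    using A(1) a(2) by (intro orbit_image_diff) auto
  moreover have "A - {a} = {..<a} \<union> {t..m}" using a(3) by (auto simp: A_def)
  ultimately show ?case
    using Suc a(1) by (simp add: LH_state_Suc A_def orbit_Suc a_def[symmetric])
qed

definition run_length :: nat where
  "run_length = (if t = 0 then Suc m else m + t)"

lemma run_length_bounds: "1 \<le> run_length" "run_length \<le> 2 * n - 1"
  using m_lt_n t_le_m by (auto simp: run_length_def)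

lemma final_basis: "fst (LH_state n M q jstar run_length) = red_basis (orbit ` {t..m})"
proof (cases "t = 0")
  case True
  then have "run_length = Suc m" unfolding run_length_def by simp
  then show ?thesis
    using forward_phase[of "Suc m"] True by (simp add: atLeast0AtMost lessThan_Suc_atMost)
next
  case False
  then have "Suc m + (t - 1) = run_length" using t_le_m by (simp add: run_length_def)
  then show ?thesis using backward_phase[of "t - 1"] False by simp
qed

lemma cycle_closed: "min_row ` orbit ` {t..m} = orbit ` {t..m}"
proof -
  have "rho_succ ` {t..m} = {t..m}"
  proof
    show "rho_succ ` {t..m} \<subseteq> {t..m}" using t_le_m by (auto simp: rho_succ_def)
    show "{t..m} \<subseteq> rho_succ ` {t..m}"
    proof
      fix x assume x: "x \<in> {t..m}"
      show "x \<in> rho_succ ` {t..m}"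
      proof (cases "x = t")
        case True
        then show ?thesis using t_le_m by (force simp: rho_succ_def)
      next
        case False
        then have "x = rho_succ (x - 1)" "x - 1 \<in> {t..m}" using x by (auto simp: rho_succ_def)
        then show ?thesis by blast
      qed
    qed
  qed
  then show ?thesis using min_row_image_orbit[of "{t..m}"] by simp
qed

lemma run_state_pivotable:
  assumes "s < run_length"
  shows "trop_basis n M q (fst (LH_state n M q jstar s)) \<and> snd (LH_state n M q jstar s) \<in> elems n
    \<and> snd (LH_state n M q jstar s) \<notin> fst (LH_state n M q jstar s)"
proof (cases "s \<le> m")
  case True
  have "inj_on rho_succ {..<s}" using True by (auto simp: inj_on_def rho_succ_def)
  then have "trop_basis n M q (red_basis (orbit ` {..<s}))"
    using True by (intro trop_basis_red_basis orbit_image_subset inj_on_min_row_orbit) auto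
  moreover have "{..<s} \<subseteq> {..m}" using True by auto
  then have "orbit s \<notin> orbit ` {..<s}" using orbit_mem_image_iff[OF True] by simp
  ultimately show ?thesis using forward_phase[of s] True orbit_lt by (simp add: elems_def)
next
  case False
  define d where "d = s - Suc m"
  define a where "a = t - Suc d"
  have d: "s = Suc m + d" "Suc d < t" using assms False by (auto simp: d_def run_length_def split: if_splits)
  have a: "0 < a" "a < t" using d(2) by (auto simp: a_def)
  let ?A = "{..<a} \<union> {t..m}"
  have A: "?A \<subseteq> {..m}" "inj_on rho_succ ?A" using a(2) t_le_m inj_on_rho_succ_backward by auto
  then have "trop_basis n M q (red_basis (orbit ` ?A))"
    by (intro trop_basis_red_basis orbit_image_subset inj_on_min_row_orbit)
  moreover have "orbit a = min_row (orbit (a - 1))" using a(1) orbit_Suc[of "a - 1"] by simp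
  then have "orbit a \<in> min_row ` orbit ` ?A" using a by auto
  ultimately show ?thesis
    using backward_phase[of d] d a(2) orbit_lt by (simp add: elems_def a_def)
qed

lemma run_pivot_defined:
  assumes "s < run_length"
  shows "snd (LH_state n M q jstar s) \<notin> fst (LH_state n M q jstar s) \<and>
    (\<exists>!B'. trop_basis n M q B' \<and> B' \<subseteq> insert (snd (LH_state n M q jstar s)) (fst (LH_state n M q jstar s))
      \<and> B' \<noteq> fst (LH_state n M q jstar s))"
  using run_state_pivotable[OF assms] unique_other_basis by blast

lemma run_not_fully_labeled:
  assumes "1 \<le> s" "s < run_length"
  shows "\<not> fully_labeled n (fst (LH_state n M q jstar s))"
proof -
  obtain s' where s': "s = Suc s'" using assms(1) not0_implies_Suc by fastforce
  obtain B \<gamma> where prev: "LH_state n M q jstar s' = (B, \<gamma>)" by fastforce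
  then have "LH_state n M q jstar s = LH_step n M q (B, \<gamma>)" using s' by (simp add: LH_state_Suc)
  then show ?thesis
    using run_state_pivotable[of s'] run_state_pivotable[OF assms(2)] s' assms(2) prev
      LH_step_not_fully_labeled[of B \<gamma>] by simp
qed

end

theorem theorem1p3:
  fixes n :: nat and M :: "nat \<Rightarrow> nat \<Rightarrow> ereal" and q :: "nat \<Rightarrow> real" and jstar :: nat
  assumes M_trop: "\<forall>i<n. \<forall>j<n. M i j \<noteq> \<infinity>"
    and M_col: "\<forall>j<n. \<exists>k<n. M k j \<noteq> -\<infinity>"
    and nondeg: "nondegenerate n M q"
    and jstar: "jstar < n"
  shows "\<exists>k. 1 \<le> k \<and> k \<le> 2 * n - 1 \<and>
     (\<forall>m<k. snd (LH_state n M q jstar m) \<notin> fst (LH_state n M q jstar m) \<and>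
            (\<exists>!B'. trop_basis n M q B' \<and>
                   B' \<subseteq> insert (snd (LH_state n M q jstar m)) (fst (LH_state n M q jstar m)) \<and>
                   B' \<noteq> fst (LH_state n M q jstar m))) \<and>
     (\<forall>m. 1 \<le> m \<and> m < k \<longrightarrow> \<not> fully_labeled n (fst (LH_state n M q jstar m))) \<and>
     fully_labeled n (fst (LH_state n M q jstar k)) \<and>
     TNECP_sol n M q (\<lambda>i. basic_point n M q (fst (LH_state n M q jstar k)) (Inl i))
                     (\<lambda>i. basic_point n M q (fst (LH_state n M q jstar k)) (Inr i))"
proof -
  interpret LH_run n M q jstar using assms by unfold_locales
  obtain m t where "t \<le> m" "inj_on orbit {..m}" "orbit (Suc m) = orbit t"
    by (rule orbit_first_repetition)
  then interpret LH_cycle n M q jstar m t by unfold_locales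
  have "fully_labeled n (fst (LH_state n M q jstar run_length))"
    using final_basis cycle_closed fully_labeled_red_basis_iff orbit_image_subset by simp
  moreover have "TNECP_sol n M q (\<lambda>i. basic_point n M q (fst (LH_state n M q jstar run_length)) (Inl i))
                                 (\<lambda>i. basic_point n M q (fst (LH_state n M q jstar run_length)) (Inr i))"
    using final_basis TNECP_sol_red_basis[OF orbit_image_subset cycle_closed] t_le_m by simp
  ultimately show ?thesis
    using run_length_bounds run_pivot_defined run_not_fully_labeled by blast
qed

end
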